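(* Let $\alpha>0$ and for $w\in\mathbb{D}$ and $i\in\mathbb{N}$ set $f_w^{[i]}(z)=\frac{z^i}{(1-\overline{w}z)^{\alpha+i}}$, $z\in\mathbb{D}$. Then for each $i\ge1$, $\|f_w^{[i]}\|_{\mathcal{B}^{\alpha}}\simeq\frac{1}{(1-|w|^2)^{i+1}}$ for all $w\in\mathbb{D}$, and $\|f_w^{[0]}\|_{\mathcal{B}^{\alpha}}\simeq\frac{1}{1-|w|^2}$ for all $w\in\mathbb{D}$ with $|w|>\frac12$.
   Context: $\mathbb{D}$ is the open unit disc in $\mathbb{C}$. For $\alpha>0$, $\mathcal{B}^{\alpha}$ is the space of analytic $f$ on $\mathbb{D}$ with $\|f\|_{\mathcal{B}^{\alpha}}=|f(0)|+\sup_{z\in\mathbb{D}}(1-|z|^2)^{\alpha}|f'(z)|<\infty$. $A\simeq B$ means there are constants $C_1,C_2>0$ independent of $w$ (possibly depending on $\alpha$ and $i$) with $C_1B\le A\le C_2B$. *)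

theory Defs
  imports "HOL-Complex_Analysis.Complex_Analysis"
begin

text \<open>Bloch-type norm on the unit disc, valued in ereal so that an infinite
  supremum is represented faithfully (the norm is \<infinity> when f is not in B^alpha).\<close>
definition bloch_norm :: "real \<Rightarrow> (complex \<Rightarrow> complex) \<Rightarrow> ereal" where
  "bloch_norm \<alpha> f = ereal (cmod (f 0)) +
     (SUP z\<in>ball 0 1. ereal ((1 - (cmod z)\<^sup>2) powr \<alpha> * cmod (deriv f z)))"

text \<open>Test functions f_w^[i](z) = z^i / (1 - conj(w) z)^(alpha+i), with the
  principal branch of the power (1 - conj(w) z has positive real part on the disc).\<close>
definition test_fun :: "real \<Rightarrow> complex \<Rightarrow> nat \<Rightarrow> complex \<Rightarrow> complex" where
  "test_fun \<alpha> w i z = z ^ i / (1 - cnj w * z) powr (complex_of_real (\<alpha> + real i))"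

end

theory Submission
  imports Defs
begin

text \<open>Both \<open>1 - |z|^2\<close> and \<open>1 - |w|^2\<close> are at most \<open>2 |1 - cnj w z|\<close>, which bounds the weighted
  derivative by a multiple of \<open>(1 - |w|^2)^-(i+1)\<close> uniformly in \<open>z\<close>. For the lower bound we
  evaluate at \<open>z = max |w| (1/2) \<cdot> w/|w|\<close>: there \<open>cnj w z\<close> is a nonnegative real,
  \<open>1 - |z|^2 \<ge> 3/4 \<cdot> |1 - cnj w z|\<close> and \<open>|1 - cnj w z| \<le> 1 - |w|^2\<close>. For \<open>i = 0\<close> the
  numerator degenerates to \<open>\<alpha> cnj w\<close>, which is small for small \<open>w\<close>; this is why
  \<open>|w| > 1/2\<close> is needed there, and \<open>z = w\<close> is used.\<close>

lemma one_minus_cnj_mult_not_nonpos_Reals: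
  assumes "cmod w < 1" "cmod z < 1"
  shows "1 - cnj w * z \<notin> \<real>\<^sub>\<le>\<^sub>0"
proof -
  have "cmod (cnj w * z) < 1"
    using assms mult_left_le_one_le[of "cmod z" "cmod w"] by (simp add: norm_mult)
  then have "Re (1 - cnj w * z) > 0"
    using complex_Re_le_cmod[of "cnj w * z"] by simp
  then show ?thesis
    by (auto simp: complex_nonpos_Reals_iff)
qed

lemma deriv_test_fun:
  assumes "cmod w < 1" "cmod z < 1"
  shows "deriv (test_fun \<alpha> w i) z =
    (of_nat i * z ^ (i - 1) + of_real \<alpha> * cnj w * z ^ i) / (1 - cnj w * z) powr of_real (\<alpha> + i + 1)"
proof -
  define X where "X = 1 - cnj w * z"
  define a where "a = complex_of_real (\<alpha> + i)"
  have X_nonpos: "X \<notin> \<real>\<^sub>\<le>\<^sub>0"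
    using one_minus_cnj_mult_not_nonpos_Reals[OF assms] by (simp add: X_def)
  have "((\<lambda>z. 1 - cnj w * z) has_field_derivative - cnj w) (at z)"
    by (auto intro!: derivative_eq_intros)
  from DERIV_chain2[OF has_field_derivative_powr[where s = "- a", OF X_nonpos[unfolded X_def]] this]
  have powr_deriv: "((\<lambda>z. (1 - cnj w * z) powr (- a)) has_field_derivative a * cnj w * X powr (- a - 1)) (at z)"
    by (simp add: X_def mult_ac)
  have X_powr: "X powr (- a) = X * X powr (- a - 1)"
  proof -
    have "X powr (- a) = X powr (1 + (- a - 1))" by simp
    also have "\<dots> = X powr 1 * X powr (- a - 1)"
      by (rule powr_add)
    also have "X powr 1 = X"
      using X_nonpos by auto
    finally show ?thesis .
  qed
  have "((\<lambda>z. z ^ i * (1 - cnj w * z) powr (- a)) has_field_derivative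
      (of_nat i * z ^ (i - 1) * X + a * cnj w * z ^ i) * X powr (- a - 1)) (at z)"
    using DERIV_mult[OF DERIV_power[OF DERIV_ident] powr_deriv] unfolding X_def[symmetric] X_powr
    by (simp add: algebra_simps)
  moreover have "test_fun \<alpha> w i = (\<lambda>z. z ^ i * (1 - cnj w * z) powr (- a))"
    by (simp add: fun_eq_iff test_fun_def a_def powr_minus divide_inverse del: of_real_add)
  moreover have "X powr (- a - 1) = 1 / X powr of_real (\<alpha> + i + 1)"
  proof -
    have exponent: "- a - 1 = - complex_of_real (\<alpha> + i + 1)"
      by (simp add: a_def)
    show ?thesis
      unfolding exponent powr_minus by (rule inverse_eq_divide)
  qed
  moreover have "of_nat i * z ^ (i - 1) * X + a * cnj w * z ^ i = of_nat i * z ^ (i - 1) + of_real \<alpha> * cnj w * z ^ i"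
  proof (cases i)
    case (Suc k)
    then show ?thesis by (simp add: X_def a_def algebra_simps)
  qed (simp add: a_def)
  ultimately show ?thesis
    by (simp add: DERIV_imp_deriv X_def)
qed

lemma norm_deriv_test_fun:
  assumes "cmod w < 1" "cmod z < 1"
  shows "cmod (deriv (test_fun \<alpha> w i) z) =
    cmod (of_nat i * z ^ (i - 1) + of_real \<alpha> * cnj w * z ^ i) / cmod (1 - cnj w * z) powr (\<alpha> + i + 1)"
  by (simp add: deriv_test_fun[OF assms] norm_divide norm_powr_real_powr' del: of_real_add)

lemma norm_one_minus_cnj_mult_commute: "cmod (1 - cnj w * z) = cmod (1 - cnj z * w)"
  by (metis complex_cnj_cnj complex_cnj_diff complex_cnj_mult complex_cnj_one complex_mod_cnj mult.commute)

lemma one_minus_norm_mult_le: "1 - cmod w * cmod z \<le> cmod (1 - cnj w * z)"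
  using norm_triangle_ineq2[of 1 "cnj w * z"] by (simp add: norm_mult)

lemma one_minus_norm_sq_le:
  assumes "cmod w \<le> 1" "cmod z \<le> 1"
  shows "1 - (cmod z)\<^sup>2 \<le> 2 * cmod (1 - cnj w * z)"
proof -
  have "1 - (cmod z)\<^sup>2 = (1 - cmod z) * (1 + cmod z)"
    by (simp add: power2_eq_square algebra_simps)
  also have "\<dots> \<le> (1 - cmod z) * 2"
    using assms(2) by (intro mult_left_mono) auto
  also have "\<dots> \<le> 2 * (1 - cmod w * cmod z)"
    using assms mult_left_le_one_le[of "cmod z" "cmod w"] by simp
  also have "\<dots> \<le> 2 * cmod (1 - cnj w * z)"
    using one_minus_norm_mult_le[of w z] by simp
  finally show ?thesis .
qed

lemma powr_divide_powr_add_nat: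
  fixes x :: real
  assumes "0 < x"
  shows "x powr a / x powr (a + real n) = 1 / x ^ n"
  using assms by (simp add: powr_diff [symmetric] powr_minus_divide powr_realpow)

lemma weighted_deriv_test_fun_le:
  assumes "0 \<le> \<alpha>" "cmod w < 1" "cmod z < 1"
  shows "(1 - (cmod z)\<^sup>2) powr \<alpha> * cmod (deriv (test_fun \<alpha> w i) z)
    \<le> (i + \<alpha>) * 2 powr \<alpha> * (2 / (1 - (cmod w)\<^sup>2)) ^ (i + 1)"
proof -
  define N where "N = cmod (1 - cnj w * z)"
  have "N > 0"
    using one_minus_cnj_mult_not_nonpos_Reals[OF assms(2,3)] by (auto simp: N_def)
  have w_le: "1 - (cmod w)\<^sup>2 \<le> 2 * N" and z_le: "1 - (cmod z)\<^sup>2 \<le> 2 * N"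
    using one_minus_norm_sq_le[of z w] one_minus_norm_sq_le[of w z] assms
    by (simp_all add: N_def norm_one_minus_cnj_mult_commute[of z w])
  have "1 - (cmod w)\<^sup>2 > 0"
    using assms(2) by (simp add: abs_square_less_1)
  have numerator: "cmod (of_nat i * z ^ (i - 1) + of_real \<alpha> * cnj w * z ^ i) \<le> i + \<alpha>"
  proof -
    have "cmod (of_nat i * z ^ (i - 1) + of_real \<alpha> * cnj w * z ^ i)
        \<le> i * cmod z ^ (i - 1) + \<alpha> * cmod w * cmod z ^ i"
      using norm_triangle_ineq[of "of_nat i * z ^ (i - 1)" "of_real \<alpha> * cnj w * z ^ i"] assms(1)
      by (simp add: norm_mult norm_power)
    also have "\<dots> \<le> real i * 1 + \<alpha> * 1 * 1"
      using assms by (intro add_mono mult_left_mono mult_mono power_le_one) auto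
    finally show ?thesis by simp
  qed
  have "(1 - (cmod z)\<^sup>2) powr \<alpha> * cmod (deriv (test_fun \<alpha> w i) z)
      \<le> (2 * N) powr \<alpha> * ((i + \<alpha>) / N powr (\<alpha> + i + 1))"
    unfolding norm_deriv_test_fun[OF assms(2,3)] N_def[symmetric]
    using z_le numerator \<open>N > 0\<close> assms(1,3)
    by (intro mult_mono powr_mono2 divide_right_mono) (auto simp: abs_square_le_1)
  also have "\<dots> = (i + \<alpha>) * 2 powr \<alpha> * (N powr \<alpha> / N powr (\<alpha> + real (i + 1)))"
    using \<open>N > 0\<close> by (simp add: powr_mult add_ac mult_ac)
  also have "\<dots> = (i + \<alpha>) * 2 powr \<alpha> * (1 / N) ^ (i + 1)"
    unfolding powr_divide_powr_add_nat[OF \<open>N > 0\<close>] by (simp add: power_one_over)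
  also have "\<dots> \<le> (i + \<alpha>) * 2 powr \<alpha> * (2 / (1 - (cmod w)\<^sup>2)) ^ (i + 1)"
    using w_le \<open>N > 0\<close> \<open>1 - (cmod w)\<^sup>2 > 0\<close> assms(1)
    by (intro mult_left_mono power_mono) (auto simp: field_simps)
  finally show ?thesis .
qed

lemma norm_deriv_numerator_ge:
  assumes "0 \<le> \<alpha>" "1 \<le> i" "cnj w * z = of_real t" "0 \<le> t"
  shows "i * cmod z ^ (i - 1) \<le> cmod (of_nat i * z ^ (i - 1) + of_real \<alpha> * cnj w * z ^ i)"
proof -
  have "z ^ i = z ^ (i - 1) * z"
    using assms(2) by (simp add: power_eq_if)
  then have "of_nat i * z ^ (i - 1) + of_real \<alpha> * cnj w * z ^ i = z ^ (i - 1) * of_real (i + \<alpha> * t)"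
    using assms(3) by (simp add: algebra_simps)
  then have "cmod (of_nat i * z ^ (i - 1) + of_real \<alpha> * cnj w * z ^ i) = cmod z ^ (i - 1) * (i + \<alpha> * t)"
    using assms(1,4) by (simp add: norm_mult norm_power del: of_real_add of_real_mult)
  moreover have "cmod z ^ (i - 1) * i \<le> cmod z ^ (i - 1) * (i + \<alpha> * t)"
    using assms(1,4) by (intro mult_left_mono) auto
  ultimately show ?thesis
    by (simp add: mult.commute)
qed

lemma cnj_mult_cis_Arg: "cnj w * (of_real r * cis (Arg w)) = of_real (r * cmod w)"
proof -
  have "cnj w * cis (Arg w) = of_real (cmod w)"
    by (metis rcis_cmod_Arg rcis_def cis_cnj cis_mult complex_cnj_complex_of_real complex_cnj_mult
        add.left_inverse cis_zero mult.assoc mult.right_neutral)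
  then show ?thesis
    by (simp add: mult.left_commute)
qed

lemma weighted_deriv_test_fun_ge:
  assumes "0 \<le> \<alpha>" "1 \<le> i" "cmod w < 1"
  obtains z where "cmod z < 1"
    "(3/4) powr \<alpha> * i / 2 ^ (i - 1) * (1 / (1 - (cmod w)\<^sup>2) ^ (i + 1))
      \<le> (1 - (cmod z)\<^sup>2) powr \<alpha> * cmod (deriv (test_fun \<alpha> w i) z)"
proof
  define s where "s = cmod w"
  define r where "r = max s (1/2)"
  define z where "z = of_real r * cis (Arg w)"
  have s: "0 \<le> s" "s < 1" and r: "1/2 \<le> r" "r < 1" "s \<le> r"
    using assms(3) by (auto simp: s_def r_def)
  have "r * s \<le> r" "s * s \<le> r * s" "s * s \<le> 1"
    using s r by (auto intro: mult_right_le_one_le mult_right_mono mult_le_one)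
  then have rs: "0 < 1 - r * s" "1 - r * s \<le> 1 - s\<^sup>2" "3/4 * (1 - r * s) \<le> 1 - r\<^sup>2"
    using s r(2) by (simp_all add: power2_eq_square) (auto simp: r_def max_def)
  have nz: "cmod z = r"
    using r by (simp add: z_def norm_mult)
  then show "cmod z < 1"
    using r by simp
  have t: "cnj w * z = of_real (r * s)"
    by (simp add: z_def s_def cnj_mult_cis_Arg)
  have X: "cmod (1 - cnj w * z) = 1 - r * s"
    unfolding t using rs(1) by (metis abs_of_pos norm_of_real of_real_1 of_real_diff)
  have numerator: "i * r ^ (i - 1) \<le> cmod (of_nat i * z ^ (i - 1) + of_real \<alpha> * cnj w * z ^ i)"
    using norm_deriv_numerator_ge[OF assms(1,2) t] s r by (simp add: nz)
  have "1 / 2 ^ (i - 1) \<le> r ^ (i - 1)"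
    using r power_mono[of "1/2" r "i - 1"] by (simp add: power_one_over)
  moreover have "(1 / (1 - s\<^sup>2)) ^ (i + 1) \<le> (1 / (1 - r * s)) ^ (i + 1)"
    using rs by (intro power_mono divide_left_mono) auto
  ultimately have "(3/4) powr \<alpha> * i * (1 / 2 ^ (i - 1)) * (1 / (1 - s\<^sup>2)) ^ (i + 1)
      \<le> (3/4) powr \<alpha> * i * r ^ (i - 1) * (1 / (1 - r * s)) ^ (i + 1)"
    using r rs by (intro mult_mono mult_left_mono) auto
  also have "\<dots> = (3/4) powr \<alpha> * i * r ^ (i - 1) * ((1 - r * s) powr \<alpha> / (1 - r * s) powr (\<alpha> + real (i + 1)))"
    unfolding powr_divide_powr_add_nat[OF rs(1)] by (simp add: power_one_over)
  also have "\<dots> = (3/4 * (1 - r * s)) powr \<alpha> * (i * r ^ (i - 1) / (1 - r * s) powr (\<alpha> + i + 1))"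
    using rs(1) powr_mult[of "3/4" "1 - r * s" \<alpha>] by (simp add: add_ac mult_ac)
  also have "\<dots> \<le> (1 - r\<^sup>2) powr \<alpha> * cmod (deriv (test_fun \<alpha> w i) z)"
    unfolding norm_deriv_test_fun[OF assms(3) \<open>cmod z < 1\<close>] X nz
    using numerator rs r assms(1) by (intro mult_mono divide_right_mono powr_mono2) auto
  finally show "(3/4) powr \<alpha> * i / 2 ^ (i - 1) * (1 / (1 - (cmod w)\<^sup>2) ^ (i + 1))
      \<le> (1 - (cmod z)\<^sup>2) powr \<alpha> * cmod (deriv (test_fun \<alpha> w i) z)"
    by (simp add: s_def nz power_one_over)
qed

lemma weighted_deriv_test_fun_zero_at_w:
  assumes "0 \<le> \<alpha>" "cmod w < 1"
  shows "(1 - (cmod w)\<^sup>2) powr \<alpha> * cmod (deriv (test_fun \<alpha> w 0) w) = \<alpha> * cmod w / (1 - (cmod w)\<^sup>2)"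
proof -
  have "0 < 1 - (cmod w)\<^sup>2"
    using assms(2) by (simp add: abs_square_less_1)
  moreover have "1 - cnj w * w = of_real (1 - (cmod w)\<^sup>2)"
    by (metis complex_norm_square mult.commute of_real_1 of_real_diff)
  ultimately have "cmod (1 - cnj w * w) = 1 - (cmod w)\<^sup>2"
    by (metis abs_of_pos norm_of_real)
  then have "(1 - (cmod w)\<^sup>2) powr \<alpha> * cmod (deriv (test_fun \<alpha> w 0) w)
      = \<alpha> * cmod w * ((1 - (cmod w)\<^sup>2) powr \<alpha> / (1 - (cmod w)\<^sup>2) powr (\<alpha> + real 1))"
    unfolding norm_deriv_test_fun[OF assms(2,2)] using assms(1) by (simp add: norm_mult mult_ac)
  also have "\<dots> = \<alpha> * cmod w / (1 - (cmod w)\<^sup>2)"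
    unfolding powr_divide_powr_add_nat[OF \<open>0 < 1 - (cmod w)\<^sup>2\<close>] by simp
  finally show ?thesis .
qed

lemma bloch_norm_le:
  assumes "\<And>z. cmod z < 1 \<Longrightarrow> (1 - (cmod z)\<^sup>2) powr \<alpha> * cmod (deriv f z) \<le> M"
  shows "bloch_norm \<alpha> f \<le> ereal (cmod (f 0) + M)"
proof -
  have "(SUP z\<in>ball 0 1. ereal ((1 - (cmod z)\<^sup>2) powr \<alpha> * cmod (deriv f z))) \<le> ereal M"
    using assms by (intro SUP_least) auto
  then show ?thesis
    unfolding bloch_norm_def by (metis add_left_mono plus_ereal.simps(1))
qed

lemma bloch_norm_ge:
  assumes "cmod z < 1"
  shows "ereal ((1 - (cmod z)\<^sup>2) powr \<alpha> * cmod (deriv f z)) \<le> bloch_norm \<alpha> f"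
proof -
  have "ereal ((1 - (cmod z)\<^sup>2) powr \<alpha> * cmod (deriv f z))
      \<le> (SUP z\<in>ball 0 1. ereal ((1 - (cmod z)\<^sup>2) powr \<alpha> * cmod (deriv f z)))"
    using assms by (intro SUP_upper) auto
  then show ?thesis
    unfolding bloch_norm_def by (rule order.trans) (simp add: add_increasing)
qed

lemma bloch_norm_test_fun_le:
  assumes "0 \<le> \<alpha>" "cmod w < 1"
  shows "bloch_norm \<alpha> (test_fun \<alpha> w i)
    \<le> ereal ((1 + (i + \<alpha>) * 2 powr \<alpha> * 2 ^ (i + 1)) * (1 / (1 - (cmod w)\<^sup>2) ^ (i + 1)))"
proof -
  define Q where "Q = 1 / (1 - (cmod w)\<^sup>2) ^ (i + 1)"
  have "0 < 1 - (cmod w)\<^sup>2"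
    using assms(2) by (simp add: abs_square_less_1)
  moreover have "(1 - (cmod w)\<^sup>2) ^ (i + 1) \<le> 1"
    using calculation by (intro power_le_one) auto
  ultimately have "0 < (1 - (cmod w)\<^sup>2) ^ (i + 1)" "(1 - (cmod w)\<^sup>2) ^ (i + 1) \<le> 1"
    by simp_all
  then have "1 \<le> Q"
    by (simp add: Q_def)
  have "bloch_norm \<alpha> (test_fun \<alpha> w i)
      \<le> ereal (cmod (test_fun \<alpha> w i 0) + (i + \<alpha>) * 2 powr \<alpha> * 2 ^ (i + 1) * Q)"
    (is "_ \<le> ereal ?bound")
    using weighted_deriv_test_fun_le[OF assms]
    by (intro bloch_norm_le) (simp add: Q_def power_divide)
  also have "?bound \<le> (1 + (i + \<alpha>) * 2 powr \<alpha> * 2 ^ (i + 1)) * Q"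
    using \<open>1 \<le> Q\<close> by (simp add: algebra_simps test_fun_def power_0_left)
  finally show ?thesis
    by (simp add: Q_def)
qed

lemma bloch_norm_test_fun_ge:
  assumes "0 \<le> \<alpha>" "1 \<le> i" "cmod w < 1"
  shows "ereal ((3/4) powr \<alpha> * i / 2 ^ (i - 1) * (1 / (1 - (cmod w)\<^sup>2) ^ (i + 1)))
    \<le> bloch_norm \<alpha> (test_fun \<alpha> w i)"
proof -
  obtain z where "cmod z < 1"
    "(3/4) powr \<alpha> * i / 2 ^ (i - 1) * (1 / (1 - (cmod w)\<^sup>2) ^ (i + 1))
      \<le> (1 - (cmod z)\<^sup>2) powr \<alpha> * cmod (deriv (test_fun \<alpha> w i) z)"
    using weighted_deriv_test_fun_ge[OF assms] .
  then show ?thesis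
    by (meson bloch_norm_ge ereal_less_eq(3) order.trans)
qed

lemma bloch_norm_test_fun_zero_ge:
  assumes "0 \<le> \<alpha>" "1/2 < cmod w" "cmod w < 1"
  shows "ereal (\<alpha> / 2 * (1 / (1 - (cmod w)\<^sup>2))) \<le> bloch_norm \<alpha> (test_fun \<alpha> w 0)"
proof -
  have "0 < 1 - (cmod w)\<^sup>2"
    using assms(3) by (simp add: abs_square_less_1)
  moreover have half: "\<alpha> / 2 \<le> \<alpha> * cmod w"
    using assms(1,2) mult_left_mono[of "1/2" "cmod w" \<alpha>] by simp
  ultimately have "\<alpha> / 2 * (1 / (1 - (cmod w)\<^sup>2)) \<le> \<alpha> * cmod w / (1 - (cmod w)\<^sup>2)"
    using divide_right_mono[OF half, of "1 - (cmod w)\<^sup>2"] by simp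
  then show ?thesis
    using bloch_norm_ge[OF assms(3), of \<alpha> "test_fun \<alpha> w 0"]
    unfolding weighted_deriv_test_fun_zero_at_w[OF assms(1,3)]
    by (meson ereal_less_eq(3) order.trans)
qed

theorem lemma2p4:
  fixes \<alpha> :: real
  assumes "\<alpha> > 0"
  shows "(\<forall>i::nat. i \<ge> 1 \<longrightarrow>
            (\<exists>C1>0. \<exists>C2>0. \<forall>w. cmod w < 1 \<longrightarrow>
               ereal (C1 * (1 / (1 - (cmod w)\<^sup>2) ^ (i + 1))) \<le> bloch_norm \<alpha> (test_fun \<alpha> w i) \<and>
               bloch_norm \<alpha> (test_fun \<alpha> w i) \<le> ereal (C2 * (1 / (1 - (cmod w)\<^sup>2) ^ (i + 1)))))
       \<and> (\<exists>C1>0. \<exists>C2>0. \<forall>w. cmod w < 1 \<and> cmod w > 1/2 \<longrightarrow>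
               ereal (C1 * (1 / (1 - (cmod w)\<^sup>2))) \<le> bloch_norm \<alpha> (test_fun \<alpha> w 0) \<and>
               bloch_norm \<alpha> (test_fun \<alpha> w 0) \<le> ereal (C2 * (1 / (1 - (cmod w)\<^sup>2))))"
  using assms
  apply (intro conjI allI impI)
  subgoal for i
    by (rule exI[of _ "(3/4) powr \<alpha> * i / 2 ^ (i - 1)"],
        intro conjI exI[of _ "1 + (i + \<alpha>) * 2 powr \<alpha> * 2 ^ (i + 1)"] allI impI
          bloch_norm_test_fun_ge bloch_norm_test_fun_le)
      (auto simp: add_pos_nonneg)
  subgoal
    by (rule exI[of _ "\<alpha> / 2"],
        intro conjI exI[of _ "1 + \<alpha> * 2 powr \<alpha> * 2"] allI impI bloch_norm_test_fun_zero_ge)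
      (use bloch_norm_test_fun_le[of \<alpha> _ 0] in \<open>auto simp: add_pos_nonneg\<close>)
  done

end
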